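(* Let $\sigma$ be a set of atomic propositions, let $\bar P$ be a finite sequence of proposition symbols disjoint from $\sigma$ with underlying set $P$, and let $L\subseteq L_\mu[\sigma\cup P]$. Let $(M_1,M_2)$ be a weak directed $\sigma$-separation of a $\sigma$-structure $M$ with interface $\bar X=(x_1,\dots,x_k)$, where $|\bar P|\ge k$. Then there exist a $\sigma$-structure $M'$, a directed $\sigma$-separation $(M_1',M_2')$ of $M'$ with the same interface $\bar X$, and isomorphisms $\pi_1:M_1\to M_1'$ and $\pi_2:M_2\to M_2'$ that are the identity on $\{x_1,\dots,x_k\}$, such that $\mathrm{tp}_{L,\bar P}(M,v,\bar X)=\mathrm{tp}_{L,\bar P}(M',\pi_i(v),\bar X)$ for all $i\in\{1,2\}$ and all $v\in V(M_i)$.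
   Context: $L_\mu[\tau]$ is the modal $\mu$-calculus over propositions $\tau$: formulas from $\top,\bot$, $R,\neg R$, fixpoint variables, $\wedge,\vee,\Diamond,\Box,\mu,\nu$. They are evaluated on structures with edge relation, with $\Diamond/\Box$ ranging over successors. **Marked structures.** $\partial_{\bar P}(M,\bar X)$ expands $M$ so that $P_i$ holds exactly at $x_i$ for $i\le|\bar X|$, and nowhere for larger $i$. **Closures and types.** $\mathrm{CL}(L)$ is the union of the Fischer–Ladner closures of the formulas in $L$. $\mathrm{PT}_P(\varphi)$ is the set of formulas obtained by replacing each occurrence $\Diamond\chi$ by $(\bigvee_{R\in Q}R)\vee\Diamond\chi$ and each occurrence $\Box\chi$ by $(\bigwedge_{R\in Q}\neg R)\wedge\Box\chi$, for freely chosen sets $Q\subseteq P$ (chosen per occurrence). $\mathrm{CL}_P(L)=\bigcup_{\varphi\in\mathrm{CL}(L)}\mathrm{PT}_P(\varphi)$, and $\mathrm{tp}_{L,\bar P}(M,v,\bar X)=\{\varphi\in\mathrm{CL}_P(L):\partial_{\bar P}(M,\bar X),v\models\varphi\}$. **Weak directed separation.** A pair $(M_1,M_2)$ of induced substructures of $M$ is a weak directed $\sigma$-separation with interface $\bar X$ if: - $V(M)=V(M_1)\cup V(M_2)$; - $X=\{x_1,\dots,x_k\}\subseteq V(M_1)\cap V(M_2)$; - there are no edges from $V(M_2)\setminus(V(M_1)\cap V(M_2))$ to $V(M_1)\setminus(V(M_1)\cap V(M_2))$; - there are no edges from $(V(M_1)\cap V(M_2))\setminus X$ to $V(M_1)\setminus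 V(M_2)$. **Directed separation.** It is a (non-weak) directed separation if moreover $X=V(M_1)\cap V(M_2)$ and there are no edges from $V(M_2)\setminus X$ to $V(M_1)\setminus X$. *)

theory Defs
  imports Main
begin

record ('v, 'p) struc =
  verts :: "'v set"
  edges :: "('v \<times> 'v) set"
  lab   :: "'p \<Rightarrow> 'v set"

definition is_struc :: "'p set \<Rightarrow> ('v, 'p) struc \<Rightarrow> bool" where
  "is_struc \<sigma> M \<longleftrightarrow>
     edges M \<subseteq> verts M \<times> verts M \<and>
     (\<forall>p. lab M p \<subseteq> verts M) \<and>
     (\<forall>p. p \<notin> \<sigma> \<longrightarrow> lab M p = {})"

definition induced_sub :: "('v, 'p) struc \<Rightarrow> ('v, 'p) struc \<Rightarrow> bool" where
  "induced_sub N M \<longleftrightarrow>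
     verts N \<subseteq> verts M \<and>
     edges N = edges M \<inter> (verts N \<times> verts N) \<and>
     (\<forall>p. lab N p = lab M p \<inter> verts N)"

definition iso :: "('v \<Rightarrow> 'w) \<Rightarrow> ('v, 'p) struc \<Rightarrow> ('w, 'p) struc \<Rightarrow> bool" where
  "iso \<pi> A B \<longleftrightarrow>
     bij_betw \<pi> (verts A) (verts B) \<and>
     (\<forall>u\<in>verts A. \<forall>w\<in>verts A. (u, w) \<in> edges A \<longleftrightarrow> (\<pi> u, \<pi> w) \<in> edges B) \<and>
     (\<forall>p. \<forall>u\<in>verts A. u \<in> lab A p \<longleftrightarrow> \<pi> u \<in> lab B p)"

text \<open>Marked structure: P_i holds exactly at x_i for i < |X|, nowhere for larger i
(0-based indices); symbols outside P keep their interpretation.\<close>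

definition mark :: "'p list \<Rightarrow> ('v, 'p) struc \<Rightarrow> 'v list \<Rightarrow> ('v, 'p) struc" where
  "mark Ps M X = M\<lparr> lab := (\<lambda>p. if p \<in> set Ps
        then {X ! i | i. i < length X \<and> i < length Ps \<and> Ps ! i = p}
        else lab M p) \<rparr>"

definition weak_dsep ::
  "'p set \<Rightarrow> ('v, 'p) struc \<Rightarrow> ('v, 'p) struc \<Rightarrow> ('v, 'p) struc \<Rightarrow> 'v list \<Rightarrow> bool" where
  "weak_dsep \<sigma> M M1 M2 X \<longleftrightarrow>
     is_struc \<sigma> M \<and> induced_sub M1 M \<and> induced_sub M2 M \<and>
     verts M = verts M1 \<union> verts M2 \<and>
     set X \<subseteq> verts M1 \<inter> verts M2 \<and>
     (\<forall>(u, w) \<in> edges M.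
        \<not> (u \<in> verts M2 - (verts M1 \<inter> verts M2) \<and> w \<in> verts M1 - (verts M1 \<inter> verts M2))) \<and>
     (\<forall>(u, w) \<in> edges M.
        \<not> (u \<in> (verts M1 \<inter> verts M2) - set X \<and> w \<in> verts M1 - verts M2))"

definition dsep ::
  "'p set \<Rightarrow> ('v, 'p) struc \<Rightarrow> ('v, 'p) struc \<Rightarrow> ('v, 'p) struc \<Rightarrow> 'v list \<Rightarrow> bool" where
  "dsep \<sigma> M M1 M2 X \<longleftrightarrow>
     weak_dsep \<sigma> M M1 M2 X \<and>
     set X = verts M1 \<inter> verts M2 \<and>
     (\<forall>(u, w) \<in> edges M. \<not> (u \<in> verts M2 - set X \<and> w \<in> verts M1 - set X))"

datatype 'p fm =
    Top | Bot | Prop 'p | NProp 'p | Var nat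
  | And "'p fm" "'p fm" | Or "'p fm" "'p fm"
  | Dia "'p fm" | Box "'p fm"
  | Mu nat "'p fm" | Nu nat "'p fm"

primrec props :: "'p fm \<Rightarrow> 'p set" where
  "props Top = {}" | "props Bot = {}" | "props (Prop p) = {p}" | "props (NProp p) = {p}"
| "props (Var x) = {}" | "props (And a b) = props a \<union> props b"
| "props (Or a b) = props a \<union> props b" | "props (Dia a) = props a"
| "props (Box a) = props a" | "props (Mu x a) = props a" | "props (Nu x a) = props a"

primrec fv :: "'p fm \<Rightarrow> nat set" where
  "fv Top = {}" | "fv Bot = {}" | "fv (Prop p) = {}" | "fv (NProp p) = {}"
| "fv (Var x) = {x}" | "fv (And a b) = fv a \<union> fv b"
| "fv (Or a b) = fv a \<union> fv b" | "fv (Dia a) = fv a"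
| "fv (Box a) = fv a" | "fv (Mu x a) = fv a - {x}" | "fv (Nu x a) = fv a - {x}"

definition Lmu :: "'p set \<Rightarrow> 'p fm set" where
  "Lmu \<tau> = {\<phi>. props \<phi> \<subseteq> \<tau> \<and> fv \<phi> = {}}"

primrec sem :: "('v, 'p) struc \<Rightarrow> (nat \<Rightarrow> 'v set) \<Rightarrow> 'p fm \<Rightarrow> 'v set" where
  "sem M \<rho> Top = verts M"
| "sem M \<rho> Bot = {}"
| "sem M \<rho> (Prop p) = verts M \<inter> lab M p"
| "sem M \<rho> (NProp p) = verts M - lab M p"
| "sem M \<rho> (Var x) = \<rho> x"
| "sem M \<rho> (And a b) = sem M \<rho> a \<inter> sem M \<rho> b"
| "sem M \<rho> (Or a b) = sem M \<rho> a \<union> sem M \<rho> b"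
| "sem M \<rho> (Dia a) = {v \<in> verts M. \<exists>w. (v, w) \<in> edges M \<and> w \<in> sem M \<rho> a}"
| "sem M \<rho> (Box a) = {v \<in> verts M. \<forall>w. (v, w) \<in> edges M \<longrightarrow> w \<in> sem M \<rho> a}"
| "sem M \<rho> (Mu x a) = lfp (\<lambda>S. verts M \<inter> sem M (\<rho>(x := S)) a)"
| "sem M \<rho> (Nu x a) = gfp (\<lambda>S. verts M \<inter> sem M (\<rho>(x := S)) a)"

definition holds :: "('v, 'p) struc \<Rightarrow> 'v \<Rightarrow> 'p fm \<Rightarrow> bool" where
  "holds M v \<phi> \<longleftrightarrow> v \<in> sem M (\<lambda>_. {}) \<phi>"

primrec subst :: "nat \<Rightarrow> 'p fm \<Rightarrow> 'p fm \<Rightarrow> 'p fm" where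
  "subst x t Top = Top" | "subst x t Bot = Bot"
| "subst x t (Prop p) = Prop p" | "subst x t (NProp p) = NProp p"
| "subst x t (Var y) = (if y = x then t else Var y)"
| "subst x t (And a b) = And (subst x t a) (subst x t b)"
| "subst x t (Or a b) = Or (subst x t a) (subst x t b)"
| "subst x t (Dia a) = Dia (subst x t a)"
| "subst x t (Box a) = Box (subst x t a)"
| "subst x t (Mu y a) = (if y = x then Mu y a else Mu y (subst x t a))"
| "subst x t (Nu y a) = (if y = x then Nu y a else Nu y (subst x t a))"

inductive_set FL :: "'p fm \<Rightarrow> 'p fm set" for \<phi> :: "'p fm" where
  base: "\<phi> \<in> FL \<phi>"
| and1: "And a b \<in> FL \<phi> \<Longrightarrow> a \<in> FL \<phi>"
| and2: "And a b \<in> FL \<phi> \<Longrightarrow> b \<in> FL \<phi>"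
| or1: "Or a b \<in> FL \<phi> \<Longrightarrow> a \<in> FL \<phi>"
| or2: "Or a b \<in> FL \<phi> \<Longrightarrow> b \<in> FL \<phi>"
| dia: "Dia a \<in> FL \<phi> \<Longrightarrow> a \<in> FL \<phi>"
| box: "Box a \<in> FL \<phi> \<Longrightarrow> a \<in> FL \<phi>"
| mu: "Mu x a \<in> FL \<phi> \<Longrightarrow> subst x (Mu x a) a \<in> FL \<phi>"
| nu: "Nu x a \<in> FL \<phi> \<Longrightarrow> subst x (Nu x a) a \<in> FL \<phi>"

definition CL :: "'p fm set \<Rightarrow> 'p fm set" where
  "CL L = (\<Union>\<phi>\<in>L. FL \<phi>)"

text \<open>PT_P(phi): replace every occurrence of Dia chi by (OR_{R in Q} R) or Dia chi and
every Box chi by (AND_{R in Q} not R) and Box chi, Q chosen per occurrence.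
The big disjunction/conjunction is written in the order of the list Ps
(for Q empty it is just Dia chi, resp. Box chi).\<close>

definition disjQ :: "'p list \<Rightarrow> 'p set \<Rightarrow> 'p fm \<Rightarrow> 'p fm" where
  "disjQ Ps Q \<psi> = foldr (\<lambda>R acc. Or (Prop R) acc) (filter (\<lambda>R. R \<in> Q) Ps) \<psi>"

definition conjQ :: "'p list \<Rightarrow> 'p set \<Rightarrow> 'p fm \<Rightarrow> 'p fm" where
  "conjQ Ps Q \<psi> = foldr (\<lambda>R acc. And (NProp R) acc) (filter (\<lambda>R. R \<in> Q) Ps) \<psi>"

primrec PT :: "'p list \<Rightarrow> 'p fm \<Rightarrow> 'p fm set" where
  "PT Ps Top = {Top}" | "PT Ps Bot = {Bot}"
| "PT Ps (Prop p) = {Prop p}" | "PT Ps (NProp p) = {NProp p}"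
| "PT Ps (Var x) = {Var x}"
| "PT Ps (And a b) = {And a' b' | a' b'. a' \<in> PT Ps a \<and> b' \<in> PT Ps b}"
| "PT Ps (Or a b) = {Or a' b' | a' b'. a' \<in> PT Ps a \<and> b' \<in> PT Ps b}"
| "PT Ps (Dia a) = {disjQ Ps Q (Dia a') | Q a'. Q \<subseteq> set Ps \<and> a' \<in> PT Ps a}"
| "PT Ps (Box a) = {conjQ Ps Q (Box a') | Q a'. Q \<subseteq> set Ps \<and> a' \<in> PT Ps a}"
| "PT Ps (Mu x a) = Mu x ` PT Ps a"
| "PT Ps (Nu x a) = Nu x ` PT Ps a"

definition CLP :: "'p list \<Rightarrow> 'p fm set \<Rightarrow> 'p fm set" where
  "CLP Ps L = (\<Union>\<phi>\<in>CL L. PT Ps \<phi>)"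

definition tp :: "'p fm set \<Rightarrow> 'p list \<Rightarrow> ('v, 'p) struc \<Rightarrow> 'v \<Rightarrow> 'v list \<Rightarrow> 'p fm set" where
  "tp L Ps M v X = {\<phi> \<in> CLP Ps L. holds (mark Ps M X) v \<phi>}"

end

theory Submission
  imports Defs
begin

text \<open>Keep M1 on tagged copies Inl v of its vertices, put the part of M2 outside the interface
on fresh copies Inr v, and drop the edges from the Inr-copies into M1 outside the interface.
Forgetting the tags is then a bounded morphism onto M: at an Inr-copy the back condition asks
that every successor in M be available among the copies or the interface, and weak separation
says exactly that. The interface vertices are the only preimages of themselves, so the markings
correspond as well, and truth of mu-calculus formulas is invariant under bounded morphisms.
In particular types agree for every set of formulas.\<close>

lemma sem_mono:
  assumes "\<And>x. \<rho> x \<subseteq> \<rho>' x"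
  shows "sem M \<rho> \<phi> \<subseteq> sem M \<rho>' \<phi>"
  using assms
proof (induction \<phi> arbitrary: \<rho> \<rho>')
  case (Mu x a)
  then show ?case
    by (simp, intro lfp_mono Int_mono order_refl) (simp add: Mu.IH)
next
  case (Nu x a)
  then show ?case
    by (simp, intro gfp_mono Int_mono order_refl) (simp add: Nu.IH)
qed (simp; blast)+

lemma mono_sem_update: "mono (\<lambda>S. verts M \<inter> sem M (\<rho>(x := S)) a)"
  by (rule monoI) (intro Int_mono order_refl sem_mono, simp)

lemma lfp_vimage_eq:
  assumes f: "mono f" and g: "mono g"
    and comm: "\<And>S. g (h -` S \<inter> V) = h -` f S \<inter> V"
  shows "lfp g = h -` lfp f \<inter> V"
proof (rule antisym)
  show "lfp g \<subseteq> h -` lfp f \<inter> V"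
    by (rule lfp_lowerbound) (metis comm lfp_unfold[OF f] order_refl)
  define G where "G = - h ` (V - lfp g)" \<comment> \<open>the largest S with h -` S \<inter> V \<subseteq> lfp g\<close>
  have "f G \<subseteq> G"
  proof
    fix v assume v: "v \<in> f G"
    show "v \<in> G"
    proof (rule ccontr)
      assume "v \<notin> G"
      then obtain u where u: "u \<in> V" "h u = v" "u \<notin> lfp g" by (auto simp: G_def)
      have "u \<in> g (h -` G \<inter> V)" using u v comm by auto
      also have "\<dots> \<subseteq> g (lfp g)" by (rule monoD[OF g]) (auto simp: G_def)
      finally show False using u lfp_unfold[OF g] by auto
    qed
  qed
  then have "lfp f \<subseteq> G" by (rule lfp_lowerbound)
  then show "h -` lfp f \<inter> V \<subseteq> lfp g" by (auto simp: G_def)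
qed

lemma gfp_vimage_eq:
  assumes f: "mono f" and g: "mono g"
    and comm: "\<And>S. g (h -` S \<inter> V) = h -` f S \<inter> V"
    and bounded: "\<And>T. g T \<subseteq> V"
  shows "gfp g = h -` gfp f \<inter> V"
proof (rule antisym)
  show "h -` gfp f \<inter> V \<subseteq> gfp g"
    by (rule gfp_upperbound) (metis comm gfp_unfold[OF f] order_refl)
  define T where "T = gfp g"
  have TV: "T \<subseteq> V" using bounded gfp_unfold[OF g] by (metis T_def)
  have "T = g T" unfolding T_def by (rule gfp_unfold[OF g])
  also have "\<dots> \<subseteq> g (h -` h ` T \<inter> V)" by (rule monoD[OF g]) (use TV in auto)
  also have "\<dots> = h -` f (h ` T) \<inter> V" by (rule comm)
  finally have "h ` T \<subseteq> f (h ` T)" by auto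
  then have "h ` T \<subseteq> gfp f" by (rule gfp_upperbound)
  then show "gfp g \<subseteq> h -` gfp f \<inter> V" using TV by (auto simp: T_def)
qed

definition bounded_morphism :: "('w \<Rightarrow> 'v) \<Rightarrow> ('w, 'p) struc \<Rightarrow> ('v, 'p) struc \<Rightarrow> bool" where
  "bounded_morphism h A B \<longleftrightarrow>
     h ` verts A \<subseteq> verts B \<and> edges A \<subseteq> verts A \<times> verts A \<and>
     (\<forall>(a, b) \<in> edges A. (h a, h b) \<in> edges B) \<and>
     (\<forall>a\<in>verts A. \<forall>w. (h a, w) \<in> edges B \<longrightarrow> (\<exists>b. (a, b) \<in> edges A \<and> h b = w)) \<and>
     (\<forall>p. \<forall>a\<in>verts A. a \<in> lab A p \<longleftrightarrow> h a \<in> lab B p)"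

lemma sem_bounded_morphism:
  assumes hom: "bounded_morphism h A B"
  shows "sem A (\<lambda>x. h -` \<rho> x \<inter> verts A) \<phi> = h -` sem B \<rho> \<phi> \<inter> verts A"
proof (induction \<phi> arbitrary: \<rho>)
  case (Dia a)
  have "u \<in> sem A (\<lambda>x. h -` \<rho> x \<inter> verts A) (Dia a) \<longleftrightarrow> u \<in> h -` sem B \<rho> (Dia a) \<inter> verts A"
    for u
  proof
    assume "u \<in> sem A (\<lambda>x. h -` \<rho> x \<inter> verts A) (Dia a)"
    then obtain w where "u \<in> verts A" "(u, w) \<in> edges A" "h w \<in> sem B \<rho> a"
      by (auto simp: Dia.IH)
    with hom show "u \<in> h -` sem B \<rho> (Dia a) \<inter> verts A"
      unfolding bounded_morphism_def by auto
  next
    assume u: "u \<in> h -` sem B \<rho> (Dia a) \<inter> verts A"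
    then obtain w where "(h u, w) \<in> edges B" "w \<in> sem B \<rho> a" by auto
    with hom u obtain b where "(u, b) \<in> edges A" "h b = w"
      unfolding bounded_morphism_def by blast
    with hom u \<open>w \<in> sem B \<rho> a\<close> show "u \<in> sem A (\<lambda>x. h -` \<rho> x \<inter> verts A) (Dia a)"
      unfolding bounded_morphism_def by (auto simp: Dia.IH)
  qed
  then show ?case by blast
next
  case (Box a)
  have "u \<in> sem A (\<lambda>x. h -` \<rho> x \<inter> verts A) (Box a) \<longleftrightarrow> u \<in> h -` sem B \<rho> (Box a) \<inter> verts A"
    if u: "u \<in> verts A" for u
  proof
    assume succ: "u \<in> sem A (\<lambda>x. h -` \<rho> x \<inter> verts A) (Box a)"
    have "w \<in> sem B \<rho> a" if "(h u, w) \<in> edges B" for w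
    proof -
      from hom u that obtain b where "(u, b) \<in> edges A" "h b = w"
        unfolding bounded_morphism_def by blast
      with succ show ?thesis by (auto simp: Box.IH)
    qed
    with hom u show "u \<in> h -` sem B \<rho> (Box a) \<inter> verts A"
      unfolding bounded_morphism_def by auto
  next
    assume "u \<in> h -` sem B \<rho> (Box a) \<inter> verts A"
    with hom show "u \<in> sem A (\<lambda>x. h -` \<rho> x \<inter> verts A) (Box a)"
      unfolding bounded_morphism_def by (auto simp: Box.IH)
  qed
  then show ?case by auto
next
  case (Mu x a)
  have "lfp (\<lambda>T. verts A \<inter> sem A ((\<lambda>y. h -` \<rho> y \<inter> verts A)(x := T)) a)
        = h -` lfp (\<lambda>S. verts B \<inter> sem B (\<rho>(x := S)) a) \<inter> verts A"
  proof (rule lfp_vimage_eq[OF mono_sem_update mono_sem_update])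
    fix S
    have "(\<lambda>y. h -` \<rho> y \<inter> verts A)(x := h -` S \<inter> verts A) = (\<lambda>y. h -` (\<rho>(x := S)) y \<inter> verts A)"
      by (rule ext) simp
    then show "verts A \<inter> sem A ((\<lambda>y. h -` \<rho> y \<inter> verts A)(x := h -` S \<inter> verts A)) a
               = h -` (verts B \<inter> sem B (\<rho>(x := S)) a) \<inter> verts A"
      using hom by (auto simp: Mu.IH bounded_morphism_def simp del: fun_upd_apply)
  qed
  then show ?case by simp
next
  case (Nu x a)
  have "gfp (\<lambda>T. verts A \<inter> sem A ((\<lambda>y. h -` \<rho> y \<inter> verts A)(x := T)) a)
        = h -` gfp (\<lambda>S. verts B \<inter> sem B (\<rho>(x := S)) a) \<inter> verts A"
  proof (rule gfp_vimage_eq[OF mono_sem_update mono_sem_update])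
    fix S
    have "(\<lambda>y. h -` \<rho> y \<inter> verts A)(x := h -` S \<inter> verts A) = (\<lambda>y. h -` (\<rho>(x := S)) y \<inter> verts A)"
      by (rule ext) simp
    then show "verts A \<inter> sem A ((\<lambda>y. h -` \<rho> y \<inter> verts A)(x := h -` S \<inter> verts A)) a
               = h -` (verts B \<inter> sem B (\<rho>(x := S)) a) \<inter> verts A"
      using hom by (auto simp: Nu.IH bounded_morphism_def simp del: fun_upd_apply)
  qed auto
  then show ?case by simp
qed (use hom in \<open>auto simp: bounded_morphism_def\<close>)

lemma holds_bounded_morphism:
  assumes "bounded_morphism h A B" and "a \<in> verts A"
  shows "holds A a \<phi> \<longleftrightarrow> holds B (h a) \<phi>"
  using sem_bounded_morphism[OF assms(1), of "\<lambda>_. {}" \<phi>] assms(2)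
  by (auto simp: holds_def)

lemma bounded_morphism_mark:
  assumes hom: "bounded_morphism h A B"
    and interface: "\<And>a i. a \<in> verts A \<Longrightarrow> i < length Y \<Longrightarrow> h a = h (Y ! i) \<Longrightarrow> a = Y ! i"
  shows "bounded_morphism h (mark Ps A Y) (mark Ps B (map h Y))"
proof -
  have "a \<in> lab (mark Ps A Y) p \<longleftrightarrow> h a \<in> lab (mark Ps B (map h Y)) p"
    if a: "a \<in> verts A" for a p
  proof (cases "p \<in> set Ps")
    case True
    have "(\<exists>i. a = Y ! i \<and> i < length Y \<and> i < length Ps \<and> Ps ! i = p) \<longleftrightarrow>
          (\<exists>i. h a = map h Y ! i \<and> i < length Y \<and> i < length Ps \<and> Ps ! i = p)"
      using interface[OF a] by (metis nth_map)
    with True show ?thesis by (simp add: mark_def)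
  next
    case False
    with a hom show ?thesis by (simp add: mark_def bounded_morphism_def)
  qed
  with hom show ?thesis
    unfolding bounded_morphism_def by (simp add: mark_def)
qed

lemma tp_bounded_morphism:
  assumes "bounded_morphism h A B"
    and "\<And>a i. a \<in> verts A \<Longrightarrow> i < length Y \<Longrightarrow> h a = h (Y ! i) \<Longrightarrow> a = Y ! i"
    and "a \<in> verts A"
  shows "tp L Ps A a Y = tp L Ps B (h a) (map h Y)"
proof -
  have "a \<in> verts (mark Ps A Y)" using assms(3) by (simp add: mark_def)
  from holds_bounded_morphism[OF bounded_morphism_mark[OF assms(1,2)] this]
  show ?thesis unfolding tp_def by blast
qed

definition induced :: "('v, 'p) struc \<Rightarrow> 'v set \<Rightarrow> ('v, 'p) struc" where
  "induced N S = \<lparr>verts = S, edges = edges N \<inter> S \<times> S, lab = (\<lambda>p. lab N p \<inter> S)\<rparr>"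

lemma induced_sub_induced: "S \<subseteq> verts N \<Longrightarrow> induced_sub (induced N S) N"
  by (auto simp: induced_sub_def induced_def)

lemma iso_induced_image:
  assumes "inj_on \<pi> (verts A)"
    and "\<And>u w. u \<in> verts A \<Longrightarrow> w \<in> verts A \<Longrightarrow> (u, w) \<in> edges A \<longleftrightarrow> (\<pi> u, \<pi> w) \<in> edges B"
    and "\<And>p u. u \<in> verts A \<Longrightarrow> u \<in> lab A p \<longleftrightarrow> \<pi> u \<in> lab B p"
  shows "iso \<pi> A (induced B (\<pi> ` verts A))"
  using assms by (auto simp: iso_def induced_def inj_on_imp_bij_betw)

lemma dsep_iff:
  "dsep \<sigma> M M1 M2 X \<longleftrightarrow>
     is_struc \<sigma> M \<and> induced_sub M1 M \<and> induced_sub M2 M \<and>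
     verts M = verts M1 \<union> verts M2 \<and> set X = verts M1 \<inter> verts M2 \<and>
     (\<forall>(u, w) \<in> edges M. \<not> (u \<in> verts M2 - set X \<and> w \<in> verts M1 - set X))"
  unfolding dsep_def weak_dsep_def by blast

definition split_verts :: "'v set \<Rightarrow> 'v set \<Rightarrow> 'v set \<Rightarrow> ('v + 'v) set" where
  "split_verts V1 V2 Z = Inl ` V1 \<union> Inr ` (V2 - Z)"

definition split_struc ::
  "('v, 'p) struc \<Rightarrow> 'v set \<Rightarrow> 'v set \<Rightarrow> 'v set \<Rightarrow> ('v + 'v, 'p) struc" where
  "split_struc M V1 V2 Z =
     \<lparr>verts = split_verts V1 V2 Z,
      edges = {(a, b) \<in> split_verts V1 V2 Z \<times> split_verts V1 V2 Z.
                 (case_sum id id a, case_sum id id b) \<in> edges M \<and>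
                 \<not> (a \<in> range Inr \<and> b \<in> Inl ` (V1 - Z))},
      lab = (\<lambda>p. {a \<in> split_verts V1 V2 Z. case_sum id id a \<in> lab M p})\<rparr>"

definition split_emb :: "'v set \<Rightarrow> 'v \<Rightarrow> 'v + 'v" where
  "split_emb Z v = (if v \<in> Z then Inl v else Inr v)"

lemma is_struc_split: "is_struc \<sigma> M \<Longrightarrow> is_struc \<sigma> (split_struc M V1 V2 Z)"
  by (auto simp: is_struc_def split_struc_def)

lemma bounded_morphism_split:
  assumes sep: "weak_dsep \<sigma> M M1 M2 X"
  shows "bounded_morphism (case_sum id id) (split_struc M (verts M1) (verts M2) (set X)) M"
proof -
  let ?V = "split_verts (verts M1) (verts M2) (set X)"
  let ?N = "split_struc M (verts M1) (verts M2) (set X)"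
  have lift: "\<exists>b. (a, b) \<in> edges ?N \<and> case_sum id id b = w"
    if a: "a \<in> ?V" and e: "(case_sum id id a, w) \<in> edges M" for a w
  proof -
    have w: "w \<in> verts M1 \<union> verts M2"
      using e sep by (auto simp: weak_dsep_def is_struc_def)
    show ?thesis
    proof (cases "w \<in> verts M1 \<and> (a \<in> range Inl \<or> w \<in> set X)")
      case True
      with a e show ?thesis
        by (intro exI[of _ "Inl w"]) (auto simp: split_struc_def split_verts_def)
    next
      case False
      have "w \<in> verts M2 - set X"
      proof (cases "w \<in> verts M1")
        case True
        with False obtain v where "a = Inr v" "v \<in> verts M2" "v \<notin> set X" "w \<notin> set X"
          using a by (auto simp: split_verts_def)
        with sep e True show ?thesis unfolding weak_dsep_def by fastforce
      next
        case False
        with w sep show ?thesis by (auto simp: weak_dsep_def)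
      qed
      with a e show ?thesis
        by (intro exI[of _ "Inr w"]) (auto simp: split_struc_def split_verts_def)
    qed
  qed
  from sep have "verts M = verts M1 \<union> verts M2" by (simp add: weak_dsep_def)
  with lift show ?thesis
    by (auto simp: bounded_morphism_def split_struc_def split_verts_def)
qed

lemma split_emb_image: "Z \<subseteq> V2 \<Longrightarrow> split_emb Z ` V2 = Inl ` Z \<union> Inr ` (V2 - Z)"
  by (auto simp: split_emb_def)

lemma dsep_split:
  assumes sep: "weak_dsep \<sigma> M M1 M2 X"
  defines "M' \<equiv> split_struc M (verts M1) (verts M2) (set X)"
  shows "dsep \<sigma> M' (induced M' (Inl ` verts M1)) (induced M' (split_emb (set X) ` verts M2))
           (map Inl X)"
proof -
  from sep have X: "set X \<subseteq> verts M1" "set X \<subseteq> verts M2" and "is_struc \<sigma> M"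
    by (auto simp: weak_dsep_def)
  have V': "verts M' = Inl ` verts M1 \<union> Inr ` (verts M2 - set X)"
    by (simp add: M'_def split_struc_def split_verts_def)
  have V2': "split_emb (set X) ` verts M2 = Inl ` set X \<union> Inr ` (verts M2 - set X)"
    using X(2) by (rule split_emb_image)
  have "is_struc \<sigma> M'"
    unfolding M'_def using \<open>is_struc \<sigma> M\<close> by (rule is_struc_split)
  moreover have "induced_sub (induced M' (Inl ` verts M1)) M'"
    by (rule induced_sub_induced) (simp add: V')
  moreover have "induced_sub (induced M' (split_emb (set X) ` verts M2)) M'"
    by (rule induced_sub_induced) (use X in \<open>auto simp: V' V2'\<close>)
  moreover have "(Inr v, Inl w) \<notin> edges M'" if "w \<in> verts M1 - set X" for v w
    using that by (auto simp: M'_def split_struc_def)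
  ultimately show ?thesis
    unfolding dsep_iff using X by (auto simp: induced_def V' V2' image_iff)
qed

lemma iso_Inl_split:
  assumes sep: "weak_dsep \<sigma> M M1 M2 X"
  defines "M' \<equiv> split_struc M (verts M1) (verts M2) (set X)"
  shows "iso Inl M1 (induced M' (Inl ` verts M1))"
proof (rule iso_induced_image)
  from sep have M1: "induced_sub M1 M" by (simp add: weak_dsep_def)
  show "(u, w) \<in> edges M1 \<longleftrightarrow> (Inl u, Inl w) \<in> edges M'"
    if "u \<in> verts M1" "w \<in> verts M1" for u w
    using that M1 by (auto simp: M'_def split_struc_def split_verts_def induced_sub_def)
  show "u \<in> lab M1 p \<longleftrightarrow> Inl u \<in> lab M' p" if "u \<in> verts M1" for u p
    using that M1 by (auto simp: M'_def split_struc_def split_verts_def induced_sub_def)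
qed simp

lemma iso_split_emb:
  assumes sep: "weak_dsep \<sigma> M M1 M2 X"
  defines "M' \<equiv> split_struc M (verts M1) (verts M2) (set X)"
  shows "iso (split_emb (set X)) M2 (induced M' (split_emb (set X) ` verts M2))"
proof (rule iso_induced_image)
  from sep have M2: "induced_sub M2 M" and X: "set X \<subseteq> verts M1"
    by (auto simp: weak_dsep_def)
  show "inj_on (split_emb (set X)) (verts M2)"
    by (auto simp: inj_on_def split_emb_def)
  show "(u, w) \<in> edges M2 \<longleftrightarrow> (split_emb (set X) u, split_emb (set X) w) \<in> edges M'"
    if "u \<in> verts M2" "w \<in> verts M2" for u w
    using that M2 X
    by (auto simp: M'_def split_struc_def split_verts_def induced_sub_def split_emb_def)
  show "u \<in> lab M2 p \<longleftrightarrow> split_emb (set X) u \<in> lab M' p" if "u \<in> verts M2" for u p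
    using that M2 X
    by (auto simp: M'_def split_struc_def split_verts_def induced_sub_def split_emb_def)
qed

lemma tp_split:
  assumes sep: "weak_dsep \<sigma> M M1 M2 X"
  defines "M' \<equiv> split_struc M (verts M1) (verts M2) (set X)"
  assumes a: "a \<in> verts M'"
  shows "tp L Ps M' a (map Inl X) = tp L Ps M (case_sum id id a) X"
proof -
  have "tp L Ps M' a (map Inl X) = tp L Ps M (case_sum id id a) (map (case_sum id id) (map Inl X))"
  proof (rule tp_bounded_morphism[OF bounded_morphism_split[OF sep, folded M'_def] _ a])
    show "b = map Inl X ! i"
      if "b \<in> verts M'" "i < length (map Inl X)" "case_sum id id b = case_sum id id (map Inl X ! i)"
      for b i
      using that by (auto simp: M'_def split_struc_def split_verts_def)
  qed
  then show ?thesis by (simp add: comp_def)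
qed

theorem theorem4p2:
  fixes \<sigma> :: "'p set" and Ps :: "'p list" and L :: "'p fm set"
    and M M1 M2 :: "('v, 'p) struc" and X :: "'v list"
  assumes "distinct Ps"
    and "set Ps \<inter> \<sigma> = {}"
    and "L \<subseteq> Lmu (\<sigma> \<union> set Ps)"
    and "is_struc \<sigma> M"
    and "weak_dsep \<sigma> M M1 M2 X"
    and "length Ps \<ge> length X"
  shows "\<exists>(M' :: ('v + 'v, 'p) struc) M1' M2' \<pi>1 \<pi>2.
           is_struc \<sigma> M' \<and> dsep \<sigma> M' M1' M2' (map Inl X) \<and>
           iso \<pi>1 M1 M1' \<and> iso \<pi>2 M2 M2' \<and>
           (\<forall>x\<in>set X. \<pi>1 x = Inl x \<and> \<pi>2 x = Inl x) \<and>
           (\<forall>v\<in>verts M1. tp L Ps M v X = tp L Ps M' (\<pi>1 v) (map Inl X)) \<and>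
           (\<forall>v\<in>verts M2. tp L Ps M v X = tp L Ps M' (\<pi>2 v) (map Inl X))"
proof -
  note sep = \<open>weak_dsep \<sigma> M M1 M2 X\<close>
  define M' where "M' = split_struc M (verts M1) (verts M2) (set X)"
  have iso1: "iso Inl M1 (induced M' (Inl ` verts M1))"
    unfolding M'_def using sep by (rule iso_Inl_split)
  have iso2: "iso (split_emb (set X)) M2 (induced M' (split_emb (set X) ` verts M2))"
    unfolding M'_def using sep by (rule iso_split_emb)
  have tp: "tp L Ps M' a (map Inl X) = tp L Ps M (case_sum id id a) X" if "a \<in> verts M'" for a
    using tp_split[OF sep that[unfolded M'_def]] by (simp add: M'_def)
  have dsep: "dsep \<sigma> M' (induced M' (Inl ` verts M1))
                (induced M' (split_emb (set X) ` verts M2)) (map Inl X)"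
    unfolding M'_def using sep by (rule dsep_split)
  then have "Inl ` verts M1 \<subseteq> verts M'" "split_emb (set X) ` verts M2 \<subseteq> verts M'"
    by (auto simp: dsep_iff induced_sub_def induced_def)
  then have "\<forall>v\<in>verts M1. tp L Ps M v X = tp L Ps M' (Inl v) (map Inl X)"
    and "\<forall>v\<in>verts M2. tp L Ps M v X = tp L Ps M' (split_emb (set X) v) (map Inl X)"
    by (auto simp: tp split_emb_def)
  moreover have "is_struc \<sigma> M'"
    unfolding M'_def using \<open>is_struc \<sigma> M\<close> by (rule is_struc_split)
  moreover have "\<forall>x\<in>set X. Inl x = Inl x \<and> split_emb (set X) x = Inl x"
    by (simp add: split_emb_def)
  ultimately show ?thesis
    using dsep iso1 iso2 by blast
qed

end
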